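(* Let $k \ge 1$ and $x \in \{2,3,4,5\}$ be integers, $m = 4k+x$, $\theta = 2\pi/m$. Let $u, v, w$ be points in general position with $w \in C_0^u$ and $v \in T_{uw}$, with $v$ to the left of $w$. Let $a$ be the intersection point of the side of $T_{uw}$ opposite $u$ with the left boundary ray of $C_0^v$. Let $C_i^v$ be the cone of $v$ containing $w$, and let $c$ and $d$ be the upper and lower corners of $T_{vw}$ (the two corners other than $v$). If $1 \le i \le k-1$, or if $i = k$ and $|cw| \le |dw|$, then $$\max\{|vc| + |cw|,\ |vd| + |dw|\} \le |va| + |aw| \quad\text{and}\quad \max\{|cw|, |dw|\} \le |aw|.$$
   Context: Cones: for $m \ge 2$, $\theta = 2\pi/m$; around each point $u$ draw $m$ rays with consecutive angular separation $\theta$, oriented so the vertical upward ray from $u$ bisects a cone, called $C_0^u$; cones are numbered $C_0^u,\dots,C_{m-1}^u$ clockwise, with the same orientation at every point. General position: no two points on a line parallel to a cone boundary ray, no two points on a line perpendicular to a cone bisector, no three points collinear. Canonical triangle: if $w$ lies in cone $C$ of $u$, $T_{uw}$ is the triangle bounded by the two boundary rays of $C$ and the line through $w$ perpendicular to the bisector of $C$. *)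

theory Defs
  imports "HOL-Analysis.Analysis"
begin

type_synonym point = "real \<times> real"

text \<open>Angles are measured clockwise from the vertical upward direction.\<close>
definition cdir :: "real \<Rightarrow> point" where
  "cdir \<psi> = (sin \<psi>, cos \<psi>)"

definition cone_angle :: "nat \<Rightarrow> real" where
  "cone_angle m = 2 * pi / real m"

definition cone :: "nat \<Rightarrow> point \<Rightarrow> nat \<Rightarrow> point set" where
  "cone m u j = {p. p \<noteq> u \<and> (\<exists>\<psi> r. real j * cone_angle m - cone_angle m / 2 \<le> \<psi>
        \<and> \<psi> < real j * cone_angle m + cone_angle m / 2 \<and> r > 0 \<and> p = u + r *\<^sub>R cdir \<psi>)}"

definition canon_tri :: "nat \<Rightarrow> point \<Rightarrow> nat \<Rightarrow> point \<Rightarrow> point set" where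
  "canon_tri m u j w = {p. (\<exists>\<psi> r. real j * cone_angle m - cone_angle m / 2 \<le> \<psi>
        \<and> \<psi> \<le> real j * cone_angle m + cone_angle m / 2 \<and> r \<ge> 0 \<and> p = u + r *\<^sub>R cdir \<psi>)
     \<and> inner (p - u) (cdir (real j * cone_angle m)) \<le> inner (w - u) (cdir (real j * cone_angle m))}"

definition tri_corners :: "nat \<Rightarrow> point \<Rightarrow> nat \<Rightarrow> point \<Rightarrow> point set" where
  "tri_corners m u j w = {p. \<exists>\<phi> r. \<phi> \<in> {real j * cone_angle m - cone_angle m / 2,
        real j * cone_angle m + cone_angle m / 2} \<and> r \<ge> 0 \<and> p = u + r *\<^sub>R cdir \<phi>
     \<and> inner (p - u) (cdir (real j * cone_angle m)) = inner (w - u) (cdir (real j * cone_angle m))}"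

definition cross :: "point \<Rightarrow> point \<Rightarrow> real" where
  "cross a b = fst a * snd b - snd a * fst b"

definition general_position :: "nat \<Rightarrow> point set \<Rightarrow> bool" where
  "general_position m P \<longleftrightarrow>
     (\<forall>p\<in>P. \<forall>q\<in>P. p \<noteq> q \<longrightarrow>
        (\<forall>j<m. cross (q - p) (cdir ((real j + 1/2) * cone_angle m)) \<noteq> 0)
      \<and> (\<forall>j<m. inner (q - p) (cdir (real j * cone_angle m)) \<noteq> 0))
   \<and> (\<forall>p\<in>P. \<forall>q\<in>P. \<forall>r\<in>P. p \<noteq> q \<and> p \<noteq> r \<and> q \<noteq> r \<longrightarrow> cross (q - p) (r - p) \<noteq> 0)"

end

theory Submission
  imports Defs
begin

text \<open>Write \<open>h = \<theta>/2\<close> and \<open>w = v + \<rho> cdir (i\<theta> + \<beta>)\<close> with \<open>|\<beta>| \<le> h\<close>.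
  Each of \<open>a\<close>, \<open>c\<close>, \<open>d\<close> lies on a ray from \<open>v\<close> at angle \<open>\<plusminus>h\<close> from a reference
  direction (vertical for \<open>a\<close>, the bisector \<open>i\<theta>\<close> for \<open>c\<close>, \<open>d\<close>) and on the line through
  \<open>w\<close> perpendicular to it. Multiplied by \<open>cos h\<close>, the paths \<open>v c w\<close>, \<open>v d w\<close>, \<open>v a w\<close>
  therefore have lengths \<open>\<rho> F x\<close> with \<open>F x = cos x + sin (x + h)\<close> at \<open>x = \<beta>, -\<beta>, i\<theta> + \<beta>\<close>,
  and the legs \<open>c w\<close>, \<open>d w\<close>, \<open>a w\<close> have lengths \<open>\<rho> sin (x + h)\<close>. As
  \<open>F x = 2 cos (pi/4 - h/2) cos (x - (pi/4 - h/2))\<close>, the path comparison amounts to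
  \<open>i\<theta> + \<beta>\<close> being closer to \<open>pi/4 - h/2\<close> than \<open>\<plusminus>\<beta>\<close>. For \<open>-\<beta>\<close> this holds once
  \<open>m \<ge> 4i + 2\<close>; for \<open>\<beta>\<close> it needs \<open>m \<ge> 4i + 6\<close>, i.e. \<open>i \<le> k - 1\<close>, unless \<open>\<beta> \<le> 0\<close>,
  which is what \<open>|cw| \<le> |dw|\<close> forces.
  The point \<open>u\<close> only serves to put \<open>a\<close> on the horizontal line through \<open>w\<close>.\<close>

lemma norm_cdir [simp]: "norm (cdir \<phi>) = 1"
  by (simp add: cdir_def norm_Pair)

lemma inner_cdir: "inner (cdir \<phi>) (cdir \<psi>) = cos (\<phi> - \<psi>)"
  by (simp add: cdir_def cos_diff algebra_simps)

lemma cdir_add: "cdir (\<phi> + \<delta>) = cos \<delta> *\<^sub>R cdir \<phi> + sin \<delta> *\<^sub>R cdir (\<phi> + pi/2)"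
  by (simp add: cdir_def sin_add cos_add algebra_simps)

lemma mult_cone_angle_le_pi:
  assumes "0 < m" "2 * n \<le> m"
  shows "real n * cone_angle m \<le> pi"
proof -
  have "real (2 * n) * pi \<le> real m * pi"
    using assms(2) by (intro mult_right_mono) auto
  then show ?thesis
    using assms(1) by (simp add: cone_angle_def field_simps)
qed

lemma cone_angle_index_bounds:
  fixes k x m i :: nat
  defines "h \<equiv> cone_angle m / 2" and "q \<equiv> real i * cone_angle m"
  assumes "2 \<le> x" "m = 4 * k + x" "1 \<le> i" "i \<le> k"
  shows "0 < h" "2 * h \<le> q" "2 * q + 2 * h \<le> pi"
    and "i < k \<Longrightarrow> 2 * q + 6 * h \<le> pi"
proof -
  have "0 < m" using assms(3,4) by simp
  then show "0 < h" "2 * h \<le> q"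
    using assms(5) by (auto simp: h_def q_def cone_angle_def field_simps)
  have "real (2 * i + 1) * cone_angle m \<le> pi"
    using assms(3-6) \<open>0 < m\<close> by (intro mult_cone_angle_le_pi) auto
  then show "2 * q + 2 * h \<le> pi"
    by (simp add: h_def q_def algebra_simps)
  assume "i < k"
  then have "real (2 * i + 3) * cone_angle m \<le> pi"
    using assms(3,4) \<open>0 < m\<close> by (intro mult_cone_angle_le_pi) auto
  then show "2 * q + 6 * h \<le> pi"
    by (simp add: h_def q_def algebra_simps)
qed

lemma cone_polarE:
  assumes "w \<in> cone m v j"
  obtains \<beta> \<rho> where "- (cone_angle m / 2) \<le> \<beta>" "\<beta> < cone_angle m / 2" "0 < \<rho>"
    "w = v + \<rho> *\<^sub>R cdir (real j * cone_angle m + \<beta>)"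
proof -
  obtain \<psi> \<rho> where "real j * cone_angle m - cone_angle m / 2 \<le> \<psi>"
      "\<psi> < real j * cone_angle m + cone_angle m / 2" "0 < \<rho>" "w = v + \<rho> *\<^sub>R cdir \<psi>"
    using assms unfolding cone_def by auto
  then show thesis
    by (intro that[of "\<psi> - real j * cone_angle m" \<rho>]) auto
qed

lemma sin_le_sin_of_add_le_pi:
  fixes x y :: real
  assumes "0 \<le> x" "x \<le> y" "x + y \<le> pi"
  shows "sin x \<le> sin y"
proof (cases "y \<le> pi/2")
  case True
  then show ?thesis using assms by (subst sin_mono_le_eq) auto
next
  case False
  have "sin x \<le> sin (pi - y)" using assms False by (subst sin_mono_le_eq) auto
  then show ?thesis by simp
qed

lemma cos_add_sin_shift_eq:
  "cos x + sin (x + h) = 2 * cos (pi/4 - h/2) * cos (x - (pi/4 - h/2))"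
proof -
  define p where "p = pi/4 - h/2"
  have "cos p * cos (x - p) = (cos (p - (x - p)) + cos (p + (x - p))) / 2"
    by (rule cos_times_cos)
  moreover have "p - (x - p) = pi/2 - (x + h)" "p + (x - p) = x"
    by (simp_all add: p_def)
  ultimately show ?thesis
    unfolding p_def[symmetric] by (simp add: sin_cos_eq[of "x + h"])
qed

lemma cos_add_sin_shift_le:
  fixes x y h :: real
  assumes "0 \<le> h" "h \<le> pi/2" "x \<le> y" "x + y + h \<le> pi/2" "- (pi/2) \<le> x"
  shows "cos x + sin (x + h) \<le> cos y + sin (y + h)"
proof -
  define p where "p = pi/4 - h/2"
  have "0 \<le> cos p"
    unfolding p_def by (rule cos_ge_zero; use assms(1,2) in linarith)
  have "\<bar>y - p\<bar> \<le> p - x"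
    using assms(3,4) by (simp add: abs_le_iff p_def)
  then have "cos (p - x) \<le> cos \<bar>y - p\<bar>"
    using assms(1,5) by (subst cos_mono_le_eq) (auto simp: p_def)
  then have "cos (x - p) \<le> cos (y - p)"
    by (metis cos_abs_real cos_minus minus_diff_eq)
  then show ?thesis
    unfolding cos_add_sin_shift_eq p_def[symmetric] using \<open>0 \<le> cos p\<close>
    by (simp add: mult_left_mono)
qed

lemma dists_via_point_on_ray:
  fixes v :: point
  assumes "0 < cos \<delta>" "0 \<le> r" "0 \<le> \<rho>" "r * cos \<delta> = \<rho> * cos \<gamma>"
  shows "cos \<delta> * dist v (v + r *\<^sub>R cdir (\<phi> + \<delta>)) = \<rho> * cos \<gamma>"
    and "cos \<delta> * dist (v + r *\<^sub>R cdir (\<phi> + \<delta>)) (v + \<rho> *\<^sub>R cdir (\<phi> + \<gamma>))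
           = \<rho> * \<bar>sin (\<gamma> - \<delta>)\<bar>"
proof -
  show "cos \<delta> * dist v (v + r *\<^sub>R cdir (\<phi> + \<delta>)) = \<rho> * cos \<gamma>"
    using assms by (simp add: dist_norm mult.commute)
  have "(v + r *\<^sub>R cdir (\<phi> + \<delta>)) - (v + \<rho> *\<^sub>R cdir (\<phi> + \<gamma>))
        = (r * cos \<delta> - \<rho> * cos \<gamma>) *\<^sub>R cdir \<phi> + (r * sin \<delta> - \<rho> * sin \<gamma>) *\<^sub>R cdir (\<phi> + pi/2)"
    unfolding cdir_add[of \<phi> \<delta>] cdir_add[of \<phi> \<gamma>] by (simp add: algebra_simps)
  also have "\<dots> = (r * sin \<delta> - \<rho> * sin \<gamma>) *\<^sub>R cdir (\<phi> + pi/2)"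
    using assms(4) by simp
  finally have "dist (v + r *\<^sub>R cdir (\<phi> + \<delta>)) (v + \<rho> *\<^sub>R cdir (\<phi> + \<gamma>)) = \<bar>r * sin \<delta> - \<rho> * sin \<gamma>\<bar>"
    by (simp add: dist_norm)
  moreover have "cos \<delta> * (r * sin \<delta> - \<rho> * sin \<gamma>) = - (\<rho> * sin (\<gamma> - \<delta>))"
    using assms(4) by (simp add: sin_diff algebra_simps)
  ultimately show "cos \<delta> * dist (v + r *\<^sub>R cdir (\<phi> + \<delta>)) (v + \<rho> *\<^sub>R cdir (\<phi> + \<gamma>))
           = \<rho> * \<bar>sin (\<gamma> - \<delta>)\<bar>"
    using assms(1,3) by (metis abs_minus_cancel abs_mult abs_of_nonneg abs_of_pos)
qed

lemma tri_corners_polar: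
  fixes m j :: nat and \<rho> \<beta> :: real and v w :: point
  defines "\<theta> \<equiv> cone_angle m"
  defines "R \<equiv> \<rho> * cos \<beta> / cos (\<theta>/2)"
  assumes "w = v + \<rho> *\<^sub>R cdir (real j * \<theta> + \<beta>)" "0 < cos (\<theta>/2)" "0 \<le> R"
  shows "tri_corners m v j w = {v + R *\<^sub>R cdir (real j * \<theta> - \<theta>/2), v + R *\<^sub>R cdir (real j * \<theta> + \<theta>/2)}"
proof -
  define q where "q = real j * \<theta>"
  have proj_w: "inner (w - v) (cdir q) = \<rho> * cos \<beta>"
    using assms(3) by (simp add: inner_cdir q_def)
  have proj: "inner (cdir \<phi>) (cdir q) = cos (\<theta>/2)" if "\<phi> \<in> {q - \<theta>/2, q + \<theta>/2}" for \<phi>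
    using that by (auto simp: inner_cdir)
  have "p \<in> tri_corners m v j w \<longleftrightarrow> (\<exists>\<phi>\<in>{q - \<theta>/2, q + \<theta>/2}. p = v + R *\<^sub>R cdir \<phi>)" for p
  proof
    assume "p \<in> tri_corners m v j w"
    then obtain \<phi> r where \<phi>: "\<phi> \<in> {q - \<theta>/2, q + \<theta>/2}" and p: "p = v + r *\<^sub>R cdir \<phi>"
        and "inner (p - v) (cdir q) = inner (w - v) (cdir q)"
      unfolding tri_corners_def q_def \<theta>_def by blast
    then have "r * cos (\<theta>/2) = \<rho> * cos \<beta>"
      using proj[OF \<phi>] proj_w p by simp
    then have "r = R"
      using assms(4) by (simp add: R_def field_simps)
    then show "\<exists>\<phi>\<in>{q - \<theta>/2, q + \<theta>/2}. p = v + R *\<^sub>R cdir \<phi>"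
      using \<phi> p by blast
  next
    assume "\<exists>\<phi>\<in>{q - \<theta>/2, q + \<theta>/2}. p = v + R *\<^sub>R cdir \<phi>"
    then obtain \<phi> where \<phi>: "\<phi> \<in> {q - \<theta>/2, q + \<theta>/2}" and p: "p = v + R *\<^sub>R cdir \<phi>"
      by blast
    have "inner (p - v) (cdir q) = inner (w - v) (cdir q)"
      using proj[OF \<phi>] proj_w p assms(4) by (simp add: R_def)
    then show "p \<in> tri_corners m v j w"
      unfolding tri_corners_def mem_Collect_eq
      by (intro exI[of _ \<phi>] exI[of _ R] conjI) (use \<phi> p assms(5) in \<open>simp_all add: q_def \<theta>_def\<close>)
  qed
  then show ?thesis
    by (auto simp: q_def)
qed

lemma tri_corners_lower_upper:
  fixes m j :: nat and \<rho> \<beta> :: real and v w c d :: point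
  defines "h \<equiv> cone_angle m / 2" and "q \<equiv> real j * cone_angle m"
  defines "R \<equiv> \<rho> * cos \<beta> / cos h"
  assumes w: "w = v + \<rho> *\<^sub>R cdir (q + \<beta>)" "0 < \<rho> * cos \<beta>"
    and angles: "0 < h" "h \<le> q" "q + h \<le> pi" "0 < cos h"
    and corners: "c \<in> tri_corners m v j w" "d \<in> tri_corners m v j w" "snd d < snd c"
  shows "c = v + R *\<^sub>R cdir (q - h)" and "d = v + R *\<^sub>R cdir (q + h)"
proof -
  have "0 < R" using w(2) angles(4) by (simp add: R_def)
  have "tri_corners m v j w = {v + R *\<^sub>R cdir (q - h), v + R *\<^sub>R cdir (q + h)}"
    unfolding h_def q_def R_def
    by (rule tri_corners_polar) (use w angles \<open>0 < R\<close> in \<open>simp_all add: h_def q_def R_def\<close>)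
  moreover have "snd (v + R *\<^sub>R cdir (q + h)) < snd (v + R *\<^sub>R cdir (q - h))"
    using \<open>0 < R\<close> angles by (simp add: cdir_def cos_monotone_0_pi)
  ultimately show "c = v + R *\<^sub>R cdir (q - h)" and "d = v + R *\<^sub>R cdir (q + h)"
    using corners by auto
qed

lemma corner_paths_le_boundary_path:
  fixes h q \<rho> \<beta> t R :: real and v w a c d :: point
  assumes angles: "0 < h" "2 * h \<le> q" "2 * q + 2 * h \<le> pi"
    and w: "w = v + \<rho> *\<^sub>R cdir (q + \<beta>)" "0 < \<rho>" "- h \<le> \<beta>" "\<beta> \<le> h"
    and a: "a = v + t *\<^sub>R cdir (- h)" "0 \<le> t" "snd a = snd w"
    and corners: "c = v + R *\<^sub>R cdir (q - h)" "d = v + R *\<^sub>R cdir (q + h)" "R * cos h = \<rho> * cos \<beta>"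
    and c_case: "2 * q + 6 * h \<le> pi \<or> dist c w \<le> dist d w"
  shows "max (dist v c + dist c w) (dist v d + dist d w) \<le> dist v a + dist a w
       \<and> max (dist c w) (dist d w) \<le> dist a w"
proof -
  define \<psi> where "\<psi> = q + \<beta>"
  note bounds = angles w(3,4)
  have cos_h: "0 < cos h" and "0 < cos \<beta>"
    by (rule cos_gt_zero_pi; use bounds in linarith)+
  then have "0 < R * cos h"
    using corners(3) w(2) by simp
  then have "0 \<le> R"
    using cos_h by (simp add: zero_less_mult_iff)
  have sin_nonneg: "0 \<le> sin (\<psi> + h)" "0 \<le> sin (\<beta> + h)" "0 \<le> sin (h - \<beta>)"
    unfolding \<psi>_def by (rule sin_ge_zero; use bounds in linarith)+
  have "t * cos (- h) = \<rho> * cos \<psi>"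
    using a w by (simp add: cdir_def \<psi>_def)
  then have va: "cos h * dist v a = \<rho> * cos \<psi>" and aw: "cos h * dist a w = \<rho> * sin (\<psi> + h)"
    using dists_via_point_on_ray[of "- h" t \<rho> \<psi> v 0] cos_h a w(2) sin_nonneg
    by (simp_all add: \<psi>_def w(1))
  have vc: "cos h * dist v c = \<rho> * cos \<beta>" and cw: "cos h * dist c w = \<rho> * sin (\<beta> + h)"
    using dists_via_point_on_ray[of "- h" R \<rho> \<beta> v q] cos_h \<open>0 \<le> R\<close> corners w(1,2) sin_nonneg
    by simp_all
  have "sin (\<beta> - h) = - sin (h - \<beta>)"
    by (metis minus_diff_eq sin_minus)
  then have vd: "cos h * dist v d = \<rho> * cos \<beta>" and dw: "cos h * dist d w = \<rho> * sin (h - \<beta>)"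
    using dists_via_point_on_ray[of h R \<rho> \<beta> v q] cos_h \<open>0 \<le> R\<close> corners w(1,2) sin_nonneg
    by simp_all
  have cw_le: "sin (\<beta> + h) \<le> sin (\<psi> + h)" and dw_le: "sin (h - \<beta>) \<le> sin (\<psi> + h)"
    unfolding \<psi>_def by (rule sin_le_sin_of_add_le_pi; use bounds in linarith)+
  have "cos (- \<beta>) + sin (- \<beta> + h) \<le> cos \<psi> + sin (\<psi> + h)"
    unfolding \<psi>_def by (rule cos_add_sin_shift_le; use bounds in linarith)
  then have d_path: "cos \<beta> + sin (h - \<beta>) \<le> cos \<psi> + sin (\<psi> + h)"
    by simp
  have c_angle: "q + 2 * \<beta> \<le> pi/2 - h"
    using c_case
  proof
    assume "2 * q + 6 * h \<le> pi"
    then show ?thesis using bounds by linarith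
  next
    assume "dist c w \<le> dist d w"
    then have "\<rho> * sin (\<beta> + h) \<le> \<rho> * sin (h - \<beta>)"
      using cw dw cos_h by (metis mult_le_cancel_left_pos)
    then have "sin (\<beta> + h) \<le> sin (h - \<beta>)"
      using w(2) by simp
    then have "\<beta> + h \<le> h - \<beta>"
      by (subst (asm) sin_mono_le_eq; use bounds in linarith)
    then show ?thesis using bounds by linarith
  qed
  have c_path: "cos \<beta> + sin (\<beta> + h) \<le> cos \<psi> + sin (\<psi> + h)"
    unfolding \<psi>_def by (rule cos_add_sin_shift_le; use bounds c_angle in linarith)
  have scaled_le: "X \<le> Y" if "cos h * X = \<rho> * x" "cos h * Y = \<rho> * y" "x \<le> y" for X Y x y
  proof -
    have "cos h * X \<le> cos h * Y"
      unfolding that(1,2) using that(3) w(2) by simp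
    then show ?thesis
      using cos_h by simp
  qed
  have "dist v c + dist c w \<le> dist v a + dist a w"
    by (rule scaled_le[OF _ _ c_path]) (simp_all only: distrib_left vc cw va aw)
  moreover have "dist v d + dist d w \<le> dist v a + dist a w"
    by (rule scaled_le[OF _ _ d_path]) (simp_all only: distrib_left vd dw va aw)
  moreover have "dist c w \<le> dist a w"
    by (rule scaled_le[OF cw aw cw_le])
  moreover have "dist d w \<le> dist a w"
    by (rule scaled_le[OF dw aw dw_le])
  ultimately show ?thesis
    by simp
qed

theorem mainTheorem3:
  fixes k x m i :: nat and u v w a c d :: point
  assumes "k \<ge> 1" and "x \<in> {2,3,4,5}" and "m = 4 * k + x"
    and "distinct [u, v, w]" and "general_position m {u, v, w}"
    and "w \<in> cone m u 0" and "v \<in> canon_tri m u 0 w" and "fst v < fst w"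
    and "\<exists>t\<ge>0. a = v + t *\<^sub>R cdir (- cone_angle m / 2)"
    and "inner (a - u) (cdir 0) = inner (w - u) (cdir 0)"
    and "i < m" and "w \<in> cone m v i"
    and "c \<in> tri_corners m v i w" and "d \<in> tri_corners m v i w" and "snd d < snd c"
    and "(1 \<le> i \<and> i \<le> k - 1) \<or> (i = k \<and> dist c w \<le> dist d w)"
  shows "max (dist v c + dist c w) (dist v d + dist d w) \<le> dist v a + dist a w
       \<and> max (dist c w) (dist d w) \<le> dist a w"
proof -
  define h where "h = cone_angle m / 2"
  define q where "q = real i * cone_angle m"
  have i: "1 \<le> i" "i \<le> k"
    using assms(1,16) by auto
  note bounds = cone_angle_index_bounds[OF _ assms(3) i, folded h_def q_def]
  have angles: "0 < h" "2 * h \<le> q" "2 * q + 2 * h \<le> pi"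
    using bounds(1-3) assms(2) by auto
  have c_case: "2 * q + 6 * h \<le> pi \<or> dist c w \<le> dist d w"
    using bounds(4) assms(2,16) by fastforce
  obtain \<beta> \<rho> where \<beta>: "- h \<le> \<beta>" "\<beta> \<le> h" and "0 < \<rho>" and w: "w = v + \<rho> *\<^sub>R cdir (q + \<beta>)"
    using cone_polarE[OF assms(12), folded h_def q_def] by (metis less_imp_le)
  obtain t where a: "a = v + t *\<^sub>R cdir (- h)" "0 \<le> t"
    using assms(9) unfolding h_def by auto
  have "snd a = snd w"
    using assms(10) by (simp add: cdir_def inner_Pair_0)
  have "0 < cos h" "0 < cos \<beta>"
    by (rule cos_gt_zero_pi; use angles \<beta> in linarith)+
  then have "c = v + (\<rho> * cos \<beta> / cos h) *\<^sub>R cdir (q - h)"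
      and "d = v + (\<rho> * cos \<beta> / cos h) *\<^sub>R cdir (q + h)"
    using tri_corners_lower_upper[where m = m and j = i, folded h_def q_def] w \<open>0 < \<rho>\<close> angles assms(13-15)
    by simp_all
  then show ?thesis
    using corner_paths_le_boundary_path[OF angles w \<open>0 < \<rho>\<close> \<beta> a \<open>snd a = snd w\<close>] c_case \<open>0 < cos h\<close>
    by simp
qed

end
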